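(* Let $n=1$, $r\in\{-1,+1\}$ and $\Phi(x,y)=r\phi(x-y)$. Let $f:\mathbb R\to\mathbb R$, $f(x)=\max_{i\in\{1,2\}}\Phi(x,y_i)-\beta_i$ for some $y_i,\beta_i\in\mathbb R$. Then for every $(\bar x,\bar v)\in\operatorname{graph}\partial f$, $f(x)\ge f(\bar x)+r\phi(x-\bar x+(\phi^* )'(r\bar v))-r\phi((\phi^* )'(r\bar v))$ for all $x\in\mathbb R$; i.e. $f$ is a-strongly convex if $r=+1$ and a-weakly convex if $r=-1$.
   Context: Standing assumption (here with $n=1$): $\phi:\mathbb R\to\mathbb R$ is convex, finite-valued, differentiable and strictly convex, super-coercive; $\phi^*$ has the same properties and $(\phi^* )'=(\phi')^{-1}$. $\partial f$ is the limiting subdifferential. a-weak convexity: for every $(\bar x,\bar v)\in\operatorname{graph}\partial f$, $f(x)\ge f(\bar x)-\phi(x-\bar x+(\phi^* )'(-\bar v))+\phi((\phi^* )'(-\bar v))$ for all $x$; a-strong convexity: $f(x)\ge f(\bar x)+\phi(x-\bar x+(\phi^* )'(\bar v))-\phi((\phi^* )'(\bar v))$ for all $x$. *)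

theory Defs
  imports "HOL-Analysis.Analysis"
begin

definition strictly_convex :: "(real \<Rightarrow> real) \<Rightarrow> bool" where
  "strictly_convex g \<longleftrightarrow> (\<forall>x y t. x \<noteq> y \<and> 0 < t \<and> t < 1 \<longrightarrow>
      g ((1 - t) * x + t * y) < (1 - t) * g x + t * g y)"

definition super_coercive :: "(real \<Rightarrow> real) \<Rightarrow> bool" where
  "super_coercive g \<longleftrightarrow> filterlim (\<lambda>x. g x / \<bar>x\<bar>) at_top at_infinity"

definition conjugate :: "(real \<Rightarrow> real) \<Rightarrow> real \<Rightarrow> real" where
  "conjugate g v = (SUP x. v * x - g x)"

definition admissible_phi :: "(real \<Rightarrow> real) \<Rightarrow> bool" where
  "admissible_phi g \<longleftrightarrow> convex_on UNIV g \<and> (\<forall>x. g differentiable at x) \<and>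
      strictly_convex g \<and> super_coercive g"

definition frechet_subdiff :: "(real \<Rightarrow> real) \<Rightarrow> real \<Rightarrow> real set" where
  "frechet_subdiff f x = {v. \<forall>e>0. \<exists>d>0. \<forall>y. \<bar>y - x\<bar> < d \<longrightarrow>
      f y \<ge> f x + v * (y - x) - e * \<bar>y - x\<bar>}"

definition limiting_subdiff :: "(real \<Rightarrow> real) \<Rightarrow> real \<Rightarrow> real set" where
  "limiting_subdiff f x = {v. \<exists>xs vs. xs \<longlonglongrightarrow> x \<and> (\<lambda>k. f (xs k)) \<longlonglongrightarrow> f x \<and>
      vs \<longlonglongrightarrow> v \<and> (\<forall>k. vs k \<in> frechet_subdiff f (xs k))}"

end

theory Submission
  imports Defs
begin

text \<open>
  Write F_i(z) = r phi(z - y_i) - beta_i. A monotone derivative has no jumps, so phi' is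
  continuous and the pieces are continuously differentiable; the max rule for limiting
  subgradients then puts r v between phi'(x - y_i) and phi'(x - y_j) for two pieces i, j active
  at x (possibly i = j), hence w = (phi')^-1(r v) lies between x - y_i and x - y_j.
  As phi' is monotone, the increment u |-> phi(u + h) - phi(u) is monotone in u, so
  r (phi(w + h) - phi(w)) is at most the corresponding increment at x - y_k for k = i or k = j;
  with h = x' - x the latter is F_k(x') - F_k(x) <= f(x') - f(x).
\<close>

lemma strictly_convex_deriv_strict_mono:
  assumes cv: "convex_on UNIV phi" and sc: "strictly_convex phi"
    and der: "\<And>x. (phi has_real_derivative p x) (at x)"
  shows "strict_mono p"
proof (rule strict_monoI)
  fix a b :: real assume "a < b"
  define m where "m = (a + b) / 2"
  have tangent: "phi v \<ge> phi u + p u * (v - u)" for u v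
    using convex_on_imp_above_tangent[OF cv, of u v "p u"] der by simp
  have "phi ((1 - 1/2) * a + (1/2) * b) < (1 - 1/2) * phi a + (1/2) * phi b"
    using sc[unfolded strictly_convex_def, rule_format, of a b "1/2"] \<open>a < b\<close> by simp
  then have "phi m < phi a / 2 + phi b / 2"
    unfolding m_def by (simp add: field_simps)
  moreover have "phi m \<ge> phi a + p a * (m - a)" "phi a \<ge> phi b + p b * (a - b)"
    using tangent by blast+
  ultimately have "p a * (b - a) < p b * (b - a)"
    unfolding m_def by (simp add: field_simps)
  then show "p a < p b" using \<open>a < b\<close> by simp
qed

lemma mono_deriv_right_limit:
  fixes f f' :: "real \<Rightarrow> real"
  assumes der: "\<And>x. (f has_real_derivative f' x) (at x)" and mono: "mono f'"
  shows "(f' \<longlongrightarrow> f' a) (at_right a)"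
proof -
  define L where "L = Inf (f' ` {a<..})"
  have lower: "f' a \<le> f' y" if "a < y" for y
    using monoD[OF mono] that by simp
  have lim: "(f' \<longlongrightarrow> L) (at_right a)"
    using Lim_right_bound[of UNIV a f' "f' a"] monoD[OF mono] lower unfolding L_def by simp
  have bdd: "bdd_below (f' ` {a<..})"
    using lower by (intro bdd_belowI2) simp
  have "f' a \<le> L"
    unfolding L_def using lower by (intro cInf_greatest) auto
  moreover have "L \<le> f' a"
  proof (rule tendsto_lowerbound)
    show "((\<lambda>y. (f y - f a) / (y - a)) \<longlongrightarrow> f' a) (at_right a)"
      using der[of a] filterlim_at_split unfolding has_field_derivative_iff by blast
    show "\<forall>\<^sub>F y in at_right a. L \<le> (f y - f a) / (y - a)"
    proof (rule eventually_at_rightI[of a "a + 1"])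
      fix y assume y: "y \<in> {a<..<a + 1}"
      obtain z where z: "a < z" "z < y" "f y - f a = (y - a) * f' z"
        using MVT2[of a y f f'] y der by auto
      have "L \<le> f' z"
        unfolding L_def using bdd z(1) by (intro cInf_lower) auto
      then show "L \<le> (f y - f a) / (y - a)"
        using z y by simp
    qed simp
  qed simp
  ultimately show ?thesis using lim by simp
qed

lemma mono_deriv_isCont:
  fixes f f' :: "real \<Rightarrow> real"
  assumes der: "\<And>x. (f has_real_derivative f' x) (at x)" and mono: "mono f'"
  shows "isCont f' a"
proof -
  have der': "((\<lambda>x. f (- x)) has_real_derivative - f' (- x)) (at x)" for x
    using DERIV_chain2[OF der DERIV_minus[OF DERIV_ident]] by simp
  have "((\<lambda>x. - f' (- x)) \<longlongrightarrow> - f' (- (- a))) (at_right (- a))"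
    by (rule mono_deriv_right_limit[OF der']) (auto simp: mono_def intro: monoD[OF mono])
  then have "((\<lambda>x. f' (- x)) \<longlongrightarrow> f' a) (at_right (- a))"
    by (simp add: tendsto_minus_cancel_left[symmetric])
  then have "(f' \<longlongrightarrow> f' a) (at_left a)"
    by (simp add: at_left_minus filterlim_filtermap)
  then show ?thesis
    using mono_deriv_right_limit[OF der mono] filterlim_split_at unfolding isCont_def by blast
qed

lemma strict_mono_inv_between:
  fixes p :: "real \<Rightarrow> real"
  assumes sm: "strict_mono p" and cont: "\<And>x. isCont p x"
    and c: "min (p a) (p b) \<le> c" "c \<le> max (p a) (p b)"
  shows "p (inv p c) = c \<and> min a b \<le> inv p c \<and> inv p c \<le> max a b"
proof -
  obtain w where w: "min a b \<le> w" "w \<le> max a b" "p w = c"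
  proof (cases "a \<le> b")
    case True
    then have "p a \<le> p b" using sm by (simp add: strict_mono_less_eq)
    then show ?thesis using IVT[of p a c b] c cont True that by auto
  next
    case False
    then have "p b \<le> p a" using sm by (simp add: strict_mono_less_eq)
    then show ?thesis using IVT[of p b c a] c cont False that by auto
  qed
  moreover have "inv p c = w"
    using w(3) strict_mono_on_imp_inj_on[OF sm] by (metis inv_f_f)
  ultimately show ?thesis by simp
qed

lemma increment_mono_of_mono_deriv:
  fixes phi p :: "real \<Rightarrow> real"
  assumes der: "\<And>x. (phi has_real_derivative p x) (at x)" and mono: "mono p"
    and "0 \<le> h" "a \<le> b"
  shows "phi (a + h) - phi a \<le> phi (b + h) - phi b"
proof -
  have "((\<lambda>x. phi (x + h) - phi x) has_real_derivative p (x + h) - p x) (at x)" for x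
    using DERIV_diff[OF DERIV_chain2[OF der DERIV_add[OF DERIV_ident DERIV_const]] der] by simp
  moreover have "0 \<le> p (x + h) - p x" for x
    using monoD[OF mono, of x "x + h"] \<open>0 \<le> h\<close> by simp
  ultimately show ?thesis
    using deriv_nonneg_imp_mono[of a b "\<lambda>x. phi (x + h) - phi x" "\<lambda>x. p (x + h) - p x"] \<open>a \<le> b\<close>
    by simp
qed

lemma increment_between:
  fixes phi p :: "real \<Rightarrow> real" and h :: real
  assumes der: "\<And>x. (phi has_real_derivative p x) (at x)" and mono: "mono p"
    and w: "min a b \<le> w" "w \<le> max a b"
  defines "G \<equiv> \<lambda>x. phi (x + h) - phi x"
  shows "min (G a) (G b) \<le> G w \<and> G w \<le> max (G a) (G b)"
proof (cases "0 \<le> h")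
  case True
  then have G: "G x \<le> G y" if "x \<le> y" for x y
    using increment_mono_of_mono_deriv[OF der mono True that] unfolding G_def by simp
  show ?thesis
    using w G[of a b] G[of b a] G[of "min a b" w] G[of w "max a b"]
    by (cases "a \<le> b") (auto simp: min_def max_def)
next
  case False
  \<comment> \<open>for \<open>h < 0\<close> the increment over \<open>[x + h, x]\<close> has the opposite sign\<close>
  then have G: "G y \<le> G x" if "x \<le> y" for x y
    using increment_mono_of_mono_deriv[OF der mono, of "- h" "x + h" "y + h"] that
    unfolding G_def by simp
  show ?thesis
    using w G[of a b] G[of b a] G[of "min a b" w] G[of w "max a b"]
    by (cases "a \<le> b") (auto simp: min_def max_def)
qed

lemma frechet_subdiff_le_of_right_bound:
  assumes v: "v \<in> frechet_subdiff f x"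
    and bound: "\<And>e. e > 0 \<Longrightarrow> \<forall>\<^sub>F y in at_right x. f y \<le> f x + (c + e) * (y - x)"
  shows "v \<le> (c::real)"
proof (rule ccontr)
  assume "\<not> v \<le> c"
  define e where "e = (v - c) / 3"
  have e: "e > 0" using \<open>\<not> v \<le> c\<close> by (simp add: e_def)
  obtain d where d: "d > 0" "\<And>y. \<bar>y - x\<bar> < d \<Longrightarrow> f y \<ge> f x + v * (y - x) - e * \<bar>y - x\<bar>"
    using v e unfolding frechet_subdiff_def by blast
  have "\<forall>\<^sub>F y in at_right x. f y \<le> f x + (c + e) * (y - x) \<and> y \<in> {x<..<x + d}"
    using bound[OF e] eventually_at_right_real[of x "x + d"] d(1) by (auto intro: eventually_conj)
  then obtain y where y: "f y \<le> f x + (c + e) * (y - x)" "x < y" "y < x + d"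
    using eventually_happens[of _ "at_right x"] by auto
  have "f y \<ge> f x + v * (y - x) - e * (y - x)" using d(2)[of y] y by auto
  with y(1) have "(v - c - 2 * e) * (y - x) \<le> 0" by (simp add: algebra_simps)
  moreover have "(v - c - 2 * e) * (y - x) > 0" using e y(2) by (simp add: e_def)
  ultimately show False by linarith
qed

lemma frechet_subdiff_ge_of_left_bound:
  assumes v: "v \<in> frechet_subdiff f x"
    and bound: "\<And>e. e > 0 \<Longrightarrow> \<forall>\<^sub>F y in at_left x. f y \<le> f x + (c - e) * (y - x)"
  shows "(c::real) \<le> v"
proof (rule ccontr)
  assume "\<not> c \<le> v"
  define e where "e = (c - v) / 3"
  have e: "e > 0" using \<open>\<not> c \<le> v\<close> by (simp add: e_def)
  obtain d where d: "d > 0" "\<And>y. \<bar>y - x\<bar> < d \<Longrightarrow> f y \<ge> f x + v * (y - x) - e * \<bar>y - x\<bar>"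
    using v e unfolding frechet_subdiff_def by blast
  have "\<forall>\<^sub>F y in at_left x. f y \<le> f x + (c - e) * (y - x) \<and> y \<in> {x - d<..<x}"
    using bound[OF e] eventually_at_left_real[of "x - d" x] d(1) by (auto intro: eventually_conj)
  then obtain y where y: "f y \<le> f x + (c - e) * (y - x)" "y < x" "x - d < y"
    using eventually_happens[of _ "at_left x"] by auto
  have "f y \<ge> f x + v * (y - x) + e * (y - x)" using d(2)[of y] y by (auto simp: algebra_simps)
  with y(1) have "(c - v - 2 * e) * (y - x) \<ge> 0" by (simp add: algebra_simps)
  moreover have "(c - v - 2 * e) * (y - x) < 0" using e y(2) by (simp add: e_def mult_pos_neg)
  ultimately show False by linarith
qed

lemma frechet_subdiff_below_max:
  fixes F1 F2 f :: "real \<Rightarrow> real"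
  assumes d1: "(F1 has_real_derivative D1) (at x)" and d2: "(F2 has_real_derivative D2) (at x)"
    and below: "\<forall>\<^sub>F y in at x. f y \<le> max (F1 y) (F2 y)" and touch: "f x = max (F1 x) (F2 x)"
    and v: "v \<in> frechet_subdiff f x"
  shows "min D1 D2 \<le> v \<and> v \<le> max D1 D2"
proof -
  have near: "\<forall>\<^sub>F y in at x. f y \<le> f x + max (D1 * (y - x)) (D2 * (y - x)) + e * \<bar>y - x\<bar>"
    if "e > 0" for e
  proof -
    have "\<forall>\<^sub>F y in at x. \<bar>F1 y - F1 x - D1 * (y - x)\<bar> \<le> e * \<bar>y - x\<bar>"
      and "\<forall>\<^sub>F y in at x. \<bar>F2 y - F2 x - D2 * (y - x)\<bar> \<le> e * \<bar>y - x\<bar>"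
      using d1 d2 that by (simp_all add: has_field_derivative_def has_derivative_within_alt2)
    with below show ?thesis
    proof eventually_elim
      case (elim y)
      have "F1 y \<le> f x + D1 * (y - x) + e * \<bar>y - x\<bar>" "F2 y \<le> f x + D2 * (y - x) + e * \<bar>y - x\<bar>"
        using elim touch max.cobounded1[of "F1 x" "F2 x"] max.cobounded2[of "F2 x" "F1 x"]
        unfolding abs_le_iff by linarith+
      then show ?case using elim(1) by linarith
    qed
  qed
  have "v \<le> max D1 D2"
  proof (rule frechet_subdiff_le_of_right_bound[OF v])
    fix e :: real assume "e > 0"
    have "\<forall>\<^sub>F y in at_right x. f y \<le> f x + max (D1 * (y - x)) (D2 * (y - x)) + e * \<bar>y - x\<bar>"
      using near[OF \<open>e > 0\<close>] by (simp add: eventually_at_split)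
    with eventually_at_right_less show "\<forall>\<^sub>F y in at_right x. f y \<le> f x + (max D1 D2 + e) * (y - x)"
      by eventually_elim (simp add: max_mult_distrib_right distrib_right)
  qed
  moreover have "min D1 D2 \<le> v"
  proof (rule frechet_subdiff_ge_of_left_bound[OF v])
    fix e :: real assume "e > 0"
    have "\<forall>\<^sub>F y in at_left x. f y \<le> f x + max (D1 * (y - x)) (D2 * (y - x)) + e * \<bar>y - x\<bar>"
      using near[OF \<open>e > 0\<close>] by (simp add: eventually_at_split)
    moreover have "\<forall>\<^sub>F y in at_left x. y < x"
      by (simp add: eventually_at_filter)
    ultimately show "\<forall>\<^sub>F y in at_left x. f y \<le> f x + (min D1 D2 - e) * (y - x)"
    proof eventually_elim
      case (elim y)
      then have "min D1 D2 * (y - x) = max (D1 * (y - x)) (D2 * (y - x))"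
        by (simp add: min_mult_distrib_right)
      moreover have "e * \<bar>y - x\<bar> = - (e * (y - x))"
        using elim by (simp add: algebra_simps)
      ultimately show ?case using elim by (simp add: left_diff_distrib)
    qed
  qed
  ultimately show ?thesis by simp
qed

lemma frechet_subdiff_max_active:
  fixes F1 F2 f :: "real \<Rightarrow> real"
  assumes d1: "(F1 has_real_derivative D1) (at x)" and c2: "isCont F2 x"
    and f: "\<And>y. f y = max (F1 y) (F2 y)" and active: "F2 x < F1 x"
    and v: "v \<in> frechet_subdiff f x"
  shows "v = D1"
proof -
  have "isCont (\<lambda>y. F1 y - F2 y) x"
    using DERIV_isCont[OF d1] c2 by (intro continuous_intros)
  then have "\<forall>\<^sub>F y in at x. 0 < F1 y - F2 y"
    using active by (intro order_tendstoD(1)) (auto simp: isCont_def)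
  then have "\<forall>\<^sub>F y in at x. f y \<le> max (F1 y) (F1 y)"
    by eventually_elim (simp add: f)
  with frechet_subdiff_below_max[OF d1 d1 _ _ v] show ?thesis
    using f active by simp
qed

lemma limiting_subdiff_max:
  fixes F1 F2 f :: "real \<Rightarrow> real"
  assumes d1: "\<And>y. (F1 has_real_derivative D1 y) (at y)" and c1: "\<And>y. isCont D1 y"
    and d2: "\<And>y. (F2 has_real_derivative D2 y) (at y)" and c2: "\<And>y. isCont D2 y"
    and f: "\<And>y. f y = max (F1 y) (F2 y)"
    and v: "v \<in> limiting_subdiff f x"
  shows "min (D1 x) (D2 x) \<le> v \<and> v \<le> max (D1 x) (D2 x)"
    and "F2 x < F1 x \<Longrightarrow> v = D1 x"
proof -
  obtain xs vs where xs: "xs \<longlonglongrightarrow> x" and vs: "vs \<longlonglongrightarrow> v"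
    and fr: "\<And>k. vs k \<in> frechet_subdiff f (xs k)"
    using v unfolding limiting_subdiff_def by blast
  have l1: "(\<lambda>k. D1 (xs k)) \<longlonglongrightarrow> D1 x" and l2: "(\<lambda>k. D2 (xs k)) \<longlonglongrightarrow> D2 x"
    using isCont_tendsto_compose[OF c1 xs] isCont_tendsto_compose[OF c2 xs] .
  have bounds: "min (D1 (xs k)) (D2 (xs k)) \<le> vs k \<and> vs k \<le> max (D1 (xs k)) (D2 (xs k))" for k
    using frechet_subdiff_below_max[OF d1 d2 _ f fr] f by simp
  show "min (D1 x) (D2 x) \<le> v \<and> v \<le> max (D1 x) (D2 x)"
    using tendsto_le[OF trivial_limit_sequentially vs tendsto_min[OF l1 l2]]
      tendsto_le[OF trivial_limit_sequentially tendsto_max[OF l1 l2] vs] bounds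
    by simp
  assume active: "F2 x < F1 x"
  have "isCont (\<lambda>y. F1 y - F2 y) x"
    using DERIV_isCont[OF d1] DERIV_isCont[OF d2] by (intro continuous_intros)
  then have "(\<lambda>k. F1 (xs k) - F2 (xs k)) \<longlonglongrightarrow> F1 x - F2 x"
    using isCont_tendsto_compose[OF _ xs] by blast
  then have "\<forall>\<^sub>F k in sequentially. 0 < F1 (xs k) - F2 (xs k)"
    using active by (intro order_tendstoD(1)) auto
  then have "\<forall>\<^sub>F k in sequentially. vs k = D1 (xs k)"
    by eventually_elim (rule frechet_subdiff_max_active[OF d1 DERIV_isCont[OF d2] f _ fr], simp)
  then have "vs \<longlonglongrightarrow> D1 x"
    using l1 tendsto_cong by fastforce
  then show "v = D1 x"
    using vs LIMSEQ_unique by blast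
qed

lemma admissible_phi_deriv:
  assumes "admissible_phi phi"
  shows "(phi has_real_derivative deriv phi x) (at x)"
    and "strict_mono (deriv phi)"
    and "isCont (deriv phi) x"
proof -
  have der: "(phi has_real_derivative deriv phi y) (at y)" for y
    using assms DERIV_deriv_iff_real_differentiable unfolding admissible_phi_def by blast
  moreover have sm: "strict_mono (deriv phi)"
    using assms strictly_convex_deriv_strict_mono[OF _ _ der] unfolding admissible_phi_def by blast
  ultimately show "(phi has_real_derivative deriv phi x) (at x)" "strict_mono (deriv phi)"
    "isCont (deriv phi) x"
    using mono_deriv_isCont[OF der strict_mono_mono[OF sm]] by blast+
qed

lemma limiting_subdiff_max_of_pieces:
  fixes phi p f :: "real \<Rightarrow> real" and r y1 y2 b1 b2 :: real
  assumes der: "\<And>y. (phi has_real_derivative p y) (at y)" and cont: "\<And>y. isCont p y"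
    and r: "r \<in> {-1, 1}"
    and f: "\<And>z. f z = max (r * phi (z - y1) - b1) (r * phi (z - y2) - b2)"
    and v: "v \<in> limiting_subdiff f x"
  obtains y b y' b' where "(y, b) \<in> {(y1, b1), (y2, b2)}" "(y', b') \<in> {(y1, b1), (y2, b2)}"
    and "f x = r * phi (x - y) - b" "f x = r * phi (x - y') - b'"
    and "min (p (x - y)) (p (x - y')) \<le> r * v" "r * v \<le> max (p (x - y)) (p (x - y'))"
proof -
  define F1 where "F1 z = r * phi (z - y1) - b1" for z
  define F2 where "F2 z = r * phi (z - y2) - b2" for z
  have f12: "f z = max (F1 z) (F2 z)" and f21: "f z = max (F2 z) (F1 z)" for z
    unfolding F1_def F2_def f by auto
  have d1: "(F1 has_real_derivative r * p (z - y1)) (at z)"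
    and d2: "(F2 has_real_derivative r * p (z - y2)) (at z)" for z
    unfolding F1_def F2_def by (auto intro!: derivative_eq_intros DERIV_chain2[OF der])
  have c1: "isCont (\<lambda>z. r * p (z - y1)) z" and c2: "isCont (\<lambda>z. r * p (z - y2)) z" for z
    by (intro continuous_intros isCont_o2[OF _ cont])+
  note lim12 = limiting_subdiff_max[OF d1 c1 d2 c2 f12 v]
    and lim21 = limiting_subdiff_max[OF d2 c2 d1 c1 f21 v]
  have rr: "r * (r * t) = t" for t
    using r by auto
  consider "F2 x < F1 x" | "F1 x < F2 x" | "F1 x = F2 x" by linarith
  then show thesis
  proof cases
    case 1
    then show thesis
      using that[of y1 b1 y1 b1] lim12(2) f12[of x] by (simp add: F1_def rr)
  next
    case 2
    then show thesis
      using that[of y2 b2 y2 b2] lim21(2) f12[of x] by (simp add: F2_def rr)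
  next
    case 3
    then show thesis
      using that[of y1 b1 y2 b2] lim12(1) f12[of x] r by (auto simp: F1_def F2_def)
  qed
qed

theorem mainTheorem15:
  fixes phi :: "real \<Rightarrow> real" and r y1 y2 b1 b2 :: real and f :: "real \<Rightarrow> real"
  assumes phi: "admissible_phi phi"
      and phistar: "admissible_phi (conjugate phi)"
      and phistar_deriv: "deriv (conjugate phi) = inv (deriv phi)"
      and r: "r \<in> {-1, 1}"
      and f_def: "\<And>x. f x = max (r * phi (x - y1) - b1) (r * phi (x - y2) - b2)"
  shows "\<forall>xb vb. vb \<in> limiting_subdiff f xb \<longrightarrow>
           (\<forall>x. f x \<ge> f xb + r * phi (x - xb + deriv (conjugate phi) (r * vb))
                          - r * phi (deriv (conjugate phi) (r * vb)))"
proof (intro allI impI)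
  fix xb vb x
  assume vb: "vb \<in> limiting_subdiff f xb"
  define p where "p = deriv phi"
  have der: "\<And>y. (phi has_real_derivative p y) (at y)" and sm: "strict_mono p"
    and cont: "\<And>y. isCont p y"
    using admissible_phi_deriv[OF phi] unfolding p_def by blast+
  define G where "G u = phi (u + (x - xb)) - phi u" for u
  obtain y b y' b' where pieces: "(y, b) \<in> {(y1, b1), (y2, b2)}" "(y', b') \<in> {(y1, b1), (y2, b2)}"
    and active: "f xb = r * phi (xb - y) - b" "f xb = r * phi (xb - y') - b'"
    and between: "min (p (xb - y)) (p (xb - y')) \<le> r * vb" "r * vb \<le> max (p (xb - y)) (p (xb - y'))"
    using limiting_subdiff_max_of_pieces[OF der cont r f_def vb] by blast
  have piece_bound: "f xb + r * G (xb - y) \<le> f x" "f xb + r * G (xb - y') \<le> f x"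
    using pieces active f_def[of x] unfolding G_def by (auto simp: algebra_simps)
  define w where "w = inv p (r * vb)"
  have "min (xb - y) (xb - y') \<le> w \<and> w \<le> max (xb - y) (xb - y')"
    using strict_mono_inv_between[OF sm cont between] unfolding w_def by blast
  then have "min (G (xb - y)) (G (xb - y')) \<le> G w \<and> G w \<le> max (G (xb - y)) (G (xb - y'))"
    using increment_between[OF der strict_mono_mono[OF sm]] unfolding G_def by blast
  then have "r * G w \<le> r * G (xb - y) \<or> r * G w \<le> r * G (xb - y')"
    using r by auto
  with piece_bound have "f xb + r * G w \<le> f x"
    by linarith
  then show "f xb + r * phi (x - xb + deriv (conjugate phi) (r * vb))
      - r * phi (deriv (conjugate phi) (r * vb)) \<le> f x"
    unfolding phistar_deriv p_def[symmetric] w_def[symmetric] G_def by (simp add: algebra_simps)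
qed

end
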